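(* Let $(A,B)$ be a Katsura pair with $B\in M_N(\{0,1\})$. If the KEP-action $(G_B,E_A)$ is regular, then it is contracting. Moreover, $(G_B,E_A)$ is regular if and only if there is $K\in\mathbb{N}$ such that (i) for $\mu\in E^*_{A,\infty}$, $A_\mu=1$ implies $|\mu|\le K$; and (ii) for $\mu\in E^*_{A,<\infty}$, $|\mu|\ge K$ implies $A_{\mu[K,|\mu|]}=1$.
   Context: Katsura pair: $N\in\mathbb{N}$, $A\in M_N(\mathbb{N})$ (nonnegative integers), $B\in M_N(\mathbb{Z})$ with $A_{ij}=0\Rightarrow B_{ij}=0$. Graph $E_A$: vertices $\{1,\dots,N\}$, edges $e_{i,j,m}$ ($0\le m<A_{ij}$), $r=i$, $s=j$. Finite paths $\mu=\mu_1\cdots\mu_n$ with $s(\mu_i)=r(\mu_{i+1})$, $|\mu|=n$, $\mu[m,n]=\mu_m\cdots\mu_n$. For $\mu=e_{i_0,i_1,r_1}\cdots e_{i_{n-1},i_n,r_n}$, $A_\mu=\prod_tA_{i_ti_{t+1}}$, $B_\mu=\prod_tB_{i_ti_{t+1}}$; $B_e=B_{r(e)s(e)}$. The group bundle $\mathbb{Z}\times E_A^0$ (elements $a_i^k$) acts by $a_i^k\cdot e_{i,j,m}=e_{i,j,\hat m}$, $a_i^k|_{e_{i,j,m}}=a_j^{\hat k}$, $kB_{ij}+m=\hat kA_{ij}+\hat m$, $0\le\hat m<A_{ij}$, extended recursively to paths; $G_B$ is the faithful quotient, $(G_B,E_A)$ the KEP-action, $(G_B)_i$ the isotropy group at $i$.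 $E^0_{A,\infty}=\{i:(G_B)_i\text{ infinite}\}$, $E^0_{A,<\infty}$ its complement; $E_{A,\infty}$ is the subgraph with vertices $E^0_{A,\infty}$ and edges $\{e:s(e)\in E^0_{A,\infty},B_e\ne0\}$; $E_{A,<\infty}$ the subgraph with vertices $E^0_{A,<\infty}$ and edges $\{e:r(e)\in E^0_{A,<\infty},B_e\ne0\}$. Contracting: there is a finite $F\subseteq G_B$ such that for every $g$ there is $n$ with $g|_\mu\in F$ for all $\mu\in d(g)E^k$, $k\ge n$. Regular: for every $g$ there is $K$ such that $g\cdot\mu=\mu$ and $|\mu|\ge K$ imply $g|_\mu$ is the unit at $s(\mu)$. *)

theory Defs
  imports Main
begin

text \<open>Matrices are functions indexed by vertices 1..N.  An edge e_{i,j,m} of E_A is the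
triple (i,j,m); its range is i and its source is j.  Elements a_i^k of the group
bundle Z x E_A^0 are pairs (k,i).\<close>

type_synonym edge = "nat \<times> nat \<times> nat"

definition katsura_pair :: "nat \<Rightarrow> (nat \<Rightarrow> nat \<Rightarrow> nat) \<Rightarrow> (nat \<Rightarrow> nat \<Rightarrow> int) \<Rightarrow> bool" where
  "katsura_pair N A B \<longleftrightarrow> (\<forall>i\<in>{1..N}. \<forall>j\<in>{1..N}. A i j = 0 \<longrightarrow> B i j = 0)"

definition edge_r :: "edge \<Rightarrow> nat" where "edge_r e = fst e"
definition edge_s :: "edge \<Rightarrow> nat" where "edge_s e = fst (snd e)"

definition is_edge :: "nat \<Rightarrow> (nat \<Rightarrow> nat \<Rightarrow> nat) \<Rightarrow> edge \<Rightarrow> bool" where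
  "is_edge N A e \<longleftrightarrow> (case e of (i, j, m) \<Rightarrow> i \<in> {1..N} \<and> j \<in> {1..N} \<and> m < A i j)"

text \<open>Finite paths of E_A with range i (i.e. the set i E_A^*), as edge lists;
the empty list at vertex i is the vertex i itself.\<close>
fun valid_path :: "nat \<Rightarrow> (nat \<Rightarrow> nat \<Rightarrow> nat) \<Rightarrow> nat \<Rightarrow> edge list \<Rightarrow> bool" where
  "valid_path N A i [] \<longleftrightarrow> i \<in> {1..N}"
| "valid_path N A i (e # \<mu>) \<longleftrightarrow> is_edge N A e \<and> edge_r e = i \<and> valid_path N A (edge_s e) \<mu>"

definition path_src :: "nat \<Rightarrow> edge list \<Rightarrow> nat" where
  "path_src i \<mu> = (if \<mu> = [] then i else edge_s (last \<mu>))"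

text \<open>A_mu and mu[m,n] = mu_m ... mu_n (1-based).\<close>
definition A_path :: "(nat \<Rightarrow> nat \<Rightarrow> nat) \<Rightarrow> edge list \<Rightarrow> nat" where
  "A_path A \<mu> = prod_list (map (\<lambda>e. A (edge_r e) (edge_s e)) \<mu>)"

definition path_seg :: "edge list \<Rightarrow> nat \<Rightarrow> nat \<Rightarrow> edge list" where
  "path_seg \<mu> m n = take (n + 1 - m) (drop (m - 1) \<mu>)"

text \<open>Action of a_i^k on an edge e_{i,j,m} and restriction:
 kB_ij + m = k' A_ij + m', 0 <= m' < A_ij.\<close>
definition edge_act :: "(nat \<Rightarrow> nat \<Rightarrow> nat) \<Rightarrow> (nat \<Rightarrow> nat \<Rightarrow> int) \<Rightarrow> int \<times> nat \<Rightarrow> edge \<Rightarrow> edge" where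
  "edge_act A B a e = (case e of (i, j, m) \<Rightarrow>
     (i, j, nat ((fst a * B i j + int m) mod int (A i j))))"

definition edge_res :: "(nat \<Rightarrow> nat \<Rightarrow> nat) \<Rightarrow> (nat \<Rightarrow> nat \<Rightarrow> int) \<Rightarrow> int \<times> nat \<Rightarrow> edge \<Rightarrow> int \<times> nat" where
  "edge_res A B a e = (case e of (i, j, m) \<Rightarrow>
     ((fst a * B i j + int m) div int (A i j), j))"

fun path_act :: "(nat \<Rightarrow> nat \<Rightarrow> nat) \<Rightarrow> (nat \<Rightarrow> nat \<Rightarrow> int) \<Rightarrow> int \<times> nat \<Rightarrow> edge list \<Rightarrow> edge list" where
  "path_act A B a [] = []"
| "path_act A B a (e # \<mu>) = edge_act A B a e # path_act A B (edge_res A B a e) \<mu>"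

fun path_res :: "(nat \<Rightarrow> nat \<Rightarrow> nat) \<Rightarrow> (nat \<Rightarrow> nat \<Rightarrow> int) \<Rightarrow> int \<times> nat \<Rightarrow> edge list \<Rightarrow> int \<times> nat" where
  "path_res A B a [] = a"
| "path_res A B a (e # \<mu>) = path_res A B (edge_res A B a e) \<mu>"

text \<open>Faithful quotient G_B: a_i^k and a_i^l are identified iff they act identically on i E_A^*.\<close>
definition gcls :: "nat \<Rightarrow> (nat \<Rightarrow> nat \<Rightarrow> nat) \<Rightarrow> (nat \<Rightarrow> nat \<Rightarrow> int) \<Rightarrow> int \<times> nat \<Rightarrow> (int \<times> nat) set" where
  "gcls N A B a = {b. snd b = snd a \<and>
      (\<forall>\<mu>. valid_path N A (snd a) \<mu> \<longrightarrow> path_act A B a \<mu> = path_act A B b \<mu>)}"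

definition G_B :: "nat \<Rightarrow> (nat \<Rightarrow> nat \<Rightarrow> nat) \<Rightarrow> (nat \<Rightarrow> nat \<Rightarrow> int) \<Rightarrow> (int \<times> nat) set set" where
  "G_B N A B = gcls N A B ` {a. snd a \<in> {1..N}}"

definition isotropy :: "nat \<Rightarrow> (nat \<Rightarrow> nat \<Rightarrow> nat) \<Rightarrow> (nat \<Rightarrow> nat \<Rightarrow> int) \<Rightarrow> nat \<Rightarrow> (int \<times> nat) set set" where
  "isotropy N A B i = {gcls N A B (k, i) | k. True}"

text \<open>Operations on G_B via a representative (well defined on classes).\<close>
definition grep :: "(int \<times> nat) set \<Rightarrow> int \<times> nat" where "grep g = (SOME a. a \<in> g)"
definition gdom :: "(int \<times> nat) set \<Rightarrow> nat" where "gdom g = snd (grep g)"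
definition gact :: "(nat \<Rightarrow> nat \<Rightarrow> nat) \<Rightarrow> (nat \<Rightarrow> nat \<Rightarrow> int) \<Rightarrow> (int \<times> nat) set \<Rightarrow> edge list \<Rightarrow> edge list" where
  "gact A B g \<mu> = path_act A B (grep g) \<mu>"
definition gres :: "nat \<Rightarrow> (nat \<Rightarrow> nat \<Rightarrow> nat) \<Rightarrow> (nat \<Rightarrow> nat \<Rightarrow> int) \<Rightarrow> (int \<times> nat) set \<Rightarrow> edge list \<Rightarrow> (int \<times> nat) set" where
  "gres N A B g \<mu> = gcls N A B (path_res A B (grep g) \<mu>)"
definition gunit :: "nat \<Rightarrow> (nat \<Rightarrow> nat \<Rightarrow> nat) \<Rightarrow> (nat \<Rightarrow> nat \<Rightarrow> int) \<Rightarrow> nat \<Rightarrow> (int \<times> nat) set" where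
  "gunit N A B i = gcls N A B (0, i)"

definition contracting :: "nat \<Rightarrow> (nat \<Rightarrow> nat \<Rightarrow> nat) \<Rightarrow> (nat \<Rightarrow> nat \<Rightarrow> int) \<Rightarrow> bool" where
  "contracting N A B \<longleftrightarrow> (\<exists>F. finite F \<and> F \<subseteq> G_B N A B \<and>
     (\<forall>g\<in>G_B N A B. \<exists>n. \<forall>k\<ge>n. \<forall>\<mu>. valid_path N A (gdom g) \<mu> \<and> length \<mu> = k
        \<longrightarrow> gres N A B g \<mu> \<in> F))"

definition regular :: "nat \<Rightarrow> (nat \<Rightarrow> nat \<Rightarrow> nat) \<Rightarrow> (nat \<Rightarrow> nat \<Rightarrow> int) \<Rightarrow> bool" where
  "regular N A B \<longleftrightarrow> (\<forall>g\<in>G_B N A B. \<exists>K. \<forall>\<mu>. valid_path N A (gdom g) \<mu> \<and>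
     gact A B g \<mu> = \<mu> \<and> length \<mu> \<ge> K \<longrightarrow> gres N A B g \<mu> = gunit N A B (path_src (gdom g) \<mu>))"

definition V_inf :: "nat \<Rightarrow> (nat \<Rightarrow> nat \<Rightarrow> nat) \<Rightarrow> (nat \<Rightarrow> nat \<Rightarrow> int) \<Rightarrow> nat set" where
  "V_inf N A B = {i\<in>{1..N}. infinite (isotropy N A B i)}"

definition V_fin :: "nat \<Rightarrow> (nat \<Rightarrow> nat \<Rightarrow> nat) \<Rightarrow> (nat \<Rightarrow> nat \<Rightarrow> int) \<Rightarrow> nat set" where
  "V_fin N A B = {1..N} - V_inf N A B"

definition subgraph_path :: "nat \<Rightarrow> (nat \<Rightarrow> nat \<Rightarrow> nat) \<Rightarrow> nat set \<Rightarrow> edge set \<Rightarrow> nat \<Rightarrow> edge list \<Rightarrow> bool" where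
  "subgraph_path N A V Ed i \<mu> \<longleftrightarrow> i \<in> V \<and> valid_path N A i \<mu> \<and> set \<mu> \<subseteq> Ed"

definition edges_inf :: "nat \<Rightarrow> (nat \<Rightarrow> nat \<Rightarrow> nat) \<Rightarrow> (nat \<Rightarrow> nat \<Rightarrow> int) \<Rightarrow> edge set" where
  "edges_inf N A B = {e. is_edge N A e \<and> edge_s e \<in> V_inf N A B \<and> B (edge_r e) (edge_s e) \<noteq> 0}"

definition edges_fin :: "nat \<Rightarrow> (nat \<Rightarrow> nat \<Rightarrow> nat) \<Rightarrow> (nat \<Rightarrow> nat \<Rightarrow> int) \<Rightarrow> edge set" where
  "edges_fin N A B = {e. is_edge N A e \<and> edge_r e \<in> V_fin N A B \<and> B (edge_r e) (edge_s e) \<noteq> 0}"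

end

(*
  For B with entries in {0, 1}, the generator a_i^k acts on a path as addition of k to the
  digits of its longest prefix of edges with B_e = 1, read as a mixed-radix numeral with bases
  A_e; the restriction is the carry, and beyond an edge with B_e = 0 everything is trivial.
  Hence a_i^d is the unit iff A_nu divides d for all such paths nu from i, and i lies in
  E_{A,<infinity} iff these A_nu are bounded.  Condition (i) makes A_mu grow with the length of
  mu along E_{A,infinity}, so carries eventually lie in {-1, 0, 1} (contraction), and a long
  B-path mu with A_mu dividing c <> 0 must leave E_{A,infinity} early; condition (ii) then makes
  the isotropy at its end trivial, which is regularity of a_v^c.  Conversely, regularity of the
  finitely many elements a_v^1 (v in E_{A,infinity}) and of the finite isotropy groups over
  E_{A,<infinity}, with a common threshold, yields (i) and (ii).
*)

theory Submission
  imports Defs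
begin

section \<open>Paths of E_A\<close>

lemma path_src_Cons: "path_src i (e # \<mu>) = path_src (edge_s e) \<mu>"
  by (simp add: path_src_def)

lemma path_src_append: "path_src i (\<mu> @ \<nu>) = path_src (path_src i \<mu>) \<nu>"
  by (induction \<mu> arbitrary: i) (auto simp: path_src_def)

lemma is_edge_vertices: "is_edge N A e \<Longrightarrow> edge_r e \<in> {1..N} \<and> edge_s e \<in> {1..N}"
  by (auto simp: is_edge_def edge_r_def edge_s_def split: prod.splits)

lemma is_edge_A_pos: "is_edge N A e \<Longrightarrow> 0 < A (edge_r e) (edge_s e)"
  by (auto simp: is_edge_def edge_r_def edge_s_def split: prod.splits)

lemma valid_path_vertex: "valid_path N A i \<mu> \<Longrightarrow> i \<in> {1..N}"
  by (cases \<mu>) (auto dest: is_edge_vertices)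

lemma valid_path_src: "valid_path N A i \<mu> \<Longrightarrow> path_src i \<mu> \<in> {1..N}"
  by (induction \<mu> arbitrary: i) (auto simp: path_src_Cons path_src_def)

lemma valid_path_append:
  "valid_path N A i (\<mu> @ \<nu>) \<longleftrightarrow> valid_path N A i \<mu> \<and> valid_path N A (path_src i \<mu>) \<nu>"
  by (induction \<mu> arbitrary: i) (auto simp: path_src_Cons path_src_def dest: valid_path_vertex)

lemma A_path_Nil [simp]: "A_path A [] = 1"
  by (simp add: A_path_def)

lemma A_path_Cons: "A_path A (e # \<mu>) = A (edge_r e) (edge_s e) * A_path A \<mu>"
  by (simp add: A_path_def)

lemma A_path_append: "A_path A (\<mu> @ \<nu>) = A_path A \<mu> * A_path A \<nu>"
  by (simp add: A_path_def)

lemma A_path_pos: "valid_path N A i \<mu> \<Longrightarrow> 0 < A_path A \<mu>"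
  by (induction \<mu> arbitrary: i) (auto simp: A_path_Cons dest: is_edge_A_pos)

lemma path_seg_to_end: "path_seg \<mu> K (length \<mu>) = drop (K - 1) \<mu>"
  by (simp add: path_seg_def)

fun path_digits :: "(nat \<Rightarrow> nat \<Rightarrow> nat) \<Rightarrow> edge list \<Rightarrow> nat" where
  "path_digits A [] = 0"
| "path_digits A ((i, j, m) # \<mu>) = m + A i j * path_digits A \<mu>"

lemma path_digits_less: "valid_path N A i \<mu> \<Longrightarrow> path_digits A \<mu> < A_path A \<mu>"
proof (induction \<mu> arbitrary: i)
  case (Cons e \<mu>)
  obtain r s m where e: "e = (r, s, m)" by (cases e)
  have "m < A r s" "path_digits A \<mu> < A_path A \<mu>"
    using Cons e by (auto simp: is_edge_def edge_s_def)
  then have "m + A r s * path_digits A \<mu> < A r s * (path_digits A \<mu> + 1)" by simp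
  also have "\<dots> \<le> A r s * A_path A \<mu>"
    using \<open>path_digits A \<mu> < A_path A \<mu>\<close> by (intro mult_le_mono2) simp
  finally show ?case by (simp add: e A_path_Cons edge_r_def edge_s_def)
qed simp

lemma path_res_snd: "snd (path_res A B a \<mu>) = path_src (snd a) \<mu>"
  by (induction \<mu> arbitrary: a) (auto simp: path_src_def edge_res_def edge_s_def split: prod.splits)

lemma path_act_res_zero:
  "valid_path N A i \<mu> \<Longrightarrow> path_act A B (0, x) \<mu> = \<mu> \<and> path_res A B (0, x) \<mu> = (0, path_src x \<mu>)"
  by (induction \<mu> arbitrary: i x)
    (auto simp: edge_act_def edge_res_def is_edge_def edge_s_def path_src_def split: prod.splits)

lemma abs_add_div_le_1:
  fixes k r a :: int
  assumes "0 \<le> r" "r < a" "\<bar>k\<bar> < a"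
  shows "\<bar>(k + r) div a\<bar> \<le> 1"
proof -
  have "-1 \<le> (k + r) div a"
    using assms(1,3) by (smt (verit) div_add_self2 div_int_pos_iff)
  moreover have "(k + r) div a \<le> 1"
    using assms(2,3) by (smt (verit, ccfv_threshold) div_pos_geq pos_imp_zdiv_pos_iff)
  ultimately show ?thesis by simp
qed

definition regular_beyond ::
  "nat \<Rightarrow> (nat \<Rightarrow> nat \<Rightarrow> nat) \<Rightarrow> (nat \<Rightarrow> nat \<Rightarrow> int) \<Rightarrow> (int \<times> nat) set \<Rightarrow> nat \<Rightarrow> bool" where
  "regular_beyond N A B g K \<longleftrightarrow> (\<forall>\<mu>. valid_path N A (gdom g) \<mu> \<and> gact A B g \<mu> = \<mu> \<and> length \<mu> \<ge> K
     \<longrightarrow> gres N A B g \<mu> = gunit N A B (path_src (gdom g) \<mu>))"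

lemma regular_iff_regular_beyond: "regular N A B \<longleftrightarrow> (\<forall>g\<in>G_B N A B. \<exists>K. regular_beyond N A B g K)"
  by (simp add: regular_def regular_beyond_def)

lemma regular_beyond_mono: "regular_beyond N A B g K \<Longrightarrow> K \<le> K' \<Longrightarrow> regular_beyond N A B g K'"
  by (auto simp: regular_beyond_def)

lemma regular_uniform_bound:
  assumes "regular N A B" and "finite X" and "X \<subseteq> G_B N A B"
  shows "\<exists>K. \<forall>g\<in>X. regular_beyond N A B g K"
proof -
  obtain f where f: "\<forall>g\<in>X. regular_beyond N A B g (f g)"
    using assms(1,3) unfolding regular_iff_regular_beyond by (metis subsetD)
  have "\<forall>g\<in>X. regular_beyond N A B g (\<Sum>g\<in>X. f g)"
    using f assms(2) by (metis member_le_sum regular_beyond_mono zero_le)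
  then show ?thesis ..
qed

section \<open>The action for a 0-1 matrix B\<close>

locale binary_katsura =
  fixes N :: nat and A :: "nat \<Rightarrow> nat \<Rightarrow> nat" and B :: "nat \<Rightarrow> nat \<Rightarrow> int"
  assumes B_01: "\<forall>i\<in>{1..N}. \<forall>j\<in>{1..N}. B i j \<in> {0, 1}"
begin

definition B_path :: "nat \<Rightarrow> edge list \<Rightarrow> bool" where
  "B_path i \<mu> \<longleftrightarrow> valid_path N A i \<mu> \<and> (\<forall>e\<in>set \<mu>. B (edge_r e) (edge_s e) \<noteq> 0)"

definition B_prefix :: "edge list \<Rightarrow> edge list" where
  "B_prefix \<mu> = takeWhile (\<lambda>e. B (edge_r e) (edge_s e) \<noteq> 0) \<mu>"

definition acts_trivially :: "nat \<Rightarrow> int \<Rightarrow> bool" where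
  "acts_trivially i d \<longleftrightarrow> (\<forall>\<nu>. B_path i \<nu> \<longrightarrow> int (A_path A \<nu>) dvd d)"

lemma edge_B_cases:
  assumes "is_edge N A (r, s, m)"
  obtains "B r s = 0" | "B r s = 1"
proof -
  have "r \<in> {1..N}" "s \<in> {1..N}" using assms by (simp_all add: is_edge_def)
  then have "B r s \<in> {0, 1}" using B_01 by blast
  then show thesis using that by blast
qed

lemma B_path_Cons:
  "B_path i (e # \<mu>) \<longleftrightarrow> is_edge N A e \<and> edge_r e = i \<and> B (edge_r e) (edge_s e) \<noteq> 0 \<and> B_path (edge_s e) \<mu>"
  by (auto simp: B_path_def)

lemma B_path_append: "B_path i (\<mu> @ \<nu>) \<longleftrightarrow> B_path i \<mu> \<and> B_path (path_src i \<mu>) \<nu>"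
  by (auto simp: B_path_def valid_path_append)

lemma B_path_B_prefix: "B_path i (B_prefix \<mu>)" if "valid_path N A i \<mu>"
proof -
  have "valid_path N A i (B_prefix \<mu>)"
    using that valid_path_append[of N A i "B_prefix \<mu>" "dropWhile (\<lambda>e. B (edge_r e) (edge_s e) \<noteq> 0) \<mu>"]
    by (simp add: B_prefix_def)
  then show ?thesis by (auto simp: B_path_def B_prefix_def dest: set_takeWhileD)
qed

lemma B_prefix_B_path: "B_path i \<mu> \<Longrightarrow> B_prefix \<mu> = \<mu>"
  by (auto simp: B_path_def B_prefix_def)

lemma acts_trivially_0 [simp]: "acts_trivially i 0"
  by (simp add: acts_trivially_def)

lemma acts_trivially_minus_iff [simp]: "acts_trivially i (- d) \<longleftrightarrow> acts_trivially i d"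
  by (simp add: acts_trivially_def)

lemma acts_trivially_add_iff: "acts_trivially i d \<Longrightarrow> acts_trivially i (d + d') \<longleftrightarrow> acts_trivially i d'"
  by (auto simp: acts_trivially_def dvd_add_right_iff)

lemma acts_trivially_mult: "acts_trivially i d \<Longrightarrow> acts_trivially i (c * d)"
  by (simp add: acts_trivially_def)

lemma acts_trivially_Cons:
  "acts_trivially i d \<Longrightarrow> B_path i (e # \<mu>) \<Longrightarrow> acts_trivially (edge_s e) d"
  unfolding acts_trivially_def
  by (metis A_path_Cons B_path_Cons dvd_mult_right of_nat_mult)

lemma path_act_eq_iff:
  "valid_path N A i \<mu> \<Longrightarrow>
   path_act A B (k, x) \<mu> = path_act A B (l, y) \<mu> \<longleftrightarrow> int (A_path A (B_prefix \<mu>)) dvd k - l"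
proof (induction \<mu> arbitrary: i k l x y)
  case Nil
  then show ?case by (simp add: B_prefix_def)
next
  case (Cons e \<mu>)
  obtain r s m where e: "e = (r, s, m)" by (cases e)
  have edge: "is_edge N A (r, s, m)" and \<mu>: "valid_path N A s \<mu>"
    using Cons.prems e by (auto simp: edge_s_def)
  then have m: "m < A r s" by (simp add: is_edge_def)
  from edge show ?case
  proof (cases rule: edge_B_cases)
    case 1
    then show ?thesis using e m by (simp add: B_prefix_def edge_act_def edge_res_def edge_r_def edge_s_def)
  next
    case 2
    let ?a = "int (A r s)" and ?P = "int (A_path A (B_prefix \<mu>))"
    have a: "?a > 0" using m by simp
    have shift: "(k + int m) div ?a - (l + int m) div ?a = (k - l) div ?a" if "?a dvd k - l"
      using div_plus_div_distrib_dvd_right[OF that, of "l + int m"] by (simp add: add.commute)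
    have "path_act A B (k, x) (e # \<mu>) = path_act A B (l, y) (e # \<mu>) \<longleftrightarrow>
          (k + int m) mod ?a = (l + int m) mod ?a \<and> ?P dvd (k + int m) div ?a - (l + int m) div ?a"
      using Cons.IH[OF \<mu>] 2 e a by (simp add: edge_act_def edge_res_def eq_nat_nat_iff)
    also have "\<dots> \<longleftrightarrow> ?a dvd k - l \<and> ?P dvd (k - l) div ?a"
      using shift by (auto simp: mod_eq_dvd_iff)
    also have "\<dots> \<longleftrightarrow> ?P * ?a dvd k - l"
      using dvd_div_iff_mult[of ?a "k - l" ?P] a by (auto intro: dvd_mult_right)
    also have "\<dots> \<longleftrightarrow> int (A_path A (B_prefix (e # \<mu>))) dvd k - l"
      using 2 e by (simp add: B_prefix_def A_path_Cons edge_r_def edge_s_def mult.commute)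
    finally show ?thesis .
  qed
qed

lemma path_res_B_path:
  "B_path i \<mu> \<Longrightarrow> fst (path_res A B (k, x) \<mu>) = (k + int (path_digits A \<mu>)) div int (A_path A \<mu>)"
proof (induction \<mu> arbitrary: i k x)
  case (Cons e \<mu>)
  obtain r s m where e: "e = (r, s, m)" by (cases e)
  have edge: "is_edge N A (r, s, m)" and B: "B r s \<noteq> 0" and \<mu>: "B_path s \<mu>"
    using Cons.prems e by (auto simp: B_path_Cons edge_r_def edge_s_def)
  from edge have "B r s = 1" using B by (cases rule: edge_B_cases) simp_all
  let ?a = "int (A r s)" and ?D = "int (path_digits A \<mu>)"
  have "fst (path_res A B (k, x) (e # \<mu>)) = ((k + int m) div ?a + ?D) div int (A_path A \<mu>)"
    using Cons.IH[OF \<mu>] e \<open>B r s = 1\<close> by (simp add: edge_res_def)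
  also have "(k + int m) div ?a + ?D = (k + int m + ?D * ?a) div ?a"
    using edge by (simp add: is_edge_def)
  also have "\<dots> div int (A_path A \<mu>) = (k + int m + ?D * ?a) div (?a * int (A_path A \<mu>))"
    by (simp add: zdiv_zmult2_eq)
  finally show ?case
    using e by (simp add: A_path_Cons edge_r_def edge_s_def algebra_simps)
qed simp

lemma path_res_not_B_path:
  "valid_path N A i \<mu> \<Longrightarrow> \<not> B_path i \<mu> \<Longrightarrow> fst (path_res A B (k, x) \<mu>) = 0"
proof (induction \<mu> arbitrary: i k x)
  case (Cons e \<mu>)
  obtain r s m where e: "e = (r, s, m)" by (cases e)
  have m: "m < A r s" and \<mu>: "valid_path N A s \<mu>"
    using Cons.prems e by (auto simp: is_edge_def edge_s_def)
  show ?case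
  proof (cases "B r s = 0")
    case True
    then show ?thesis using e m path_act_res_zero[OF \<mu>] by (simp add: edge_res_def)
  next
    case False
    then have "\<not> B_path s \<mu>" using Cons.prems e by (auto simp: B_path_def edge_r_def edge_s_def)
    then show ?thesis using Cons.IH[OF \<mu>] e by (simp add: edge_res_def)
  qed
qed (simp add: B_path_def)

lemma path_res_B_path_dvd:
  assumes "B_path i \<mu>" and "int (A_path A \<mu>) dvd k"
  shows "fst (path_res A B (k, x) \<mu>) = k div int (A_path A \<mu>)"
proof -
  have "path_digits A \<mu> < A_path A \<mu>" using assms(1) path_digits_less by (auto simp: B_path_def)
  then show ?thesis
    using path_res_B_path[OF assms(1)] div_plus_div_distrib_dvd_left[OF assms(2)] by simp
qed

lemma acts_trivially_path_res:
  assumes \<mu>: "valid_path N A i \<mu>" and kl: "acts_trivially i (k - l)"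
  shows "acts_trivially (path_src i \<mu>) (fst (path_res A B (k, x) \<mu>) - fst (path_res A B (l, y) \<mu>))"
proof (cases "B_path i \<mu>")
  case True
  let ?a = "int (A_path A \<mu>)"
  have a: "?a dvd k - l" using kl True by (simp add: acts_trivially_def)
  have "fst (path_res A B (k, x) \<mu>) - fst (path_res A B (l, y) \<mu>) = (k - l) div ?a"
    using path_res_B_path[OF True] div_plus_div_distrib_dvd_right[OF a, of "l + int (path_digits A \<mu>)"]
    by (simp add: algebra_simps)
  moreover have "acts_trivially (path_src i \<mu>) ((k - l) div ?a)"
    unfolding acts_trivially_def
  proof (intro allI impI)
    fix \<nu> assume "B_path (path_src i \<mu>) \<nu>"
    then have "int (A_path A (\<mu> @ \<nu>)) dvd k - l"
      using kl True by (simp add: acts_trivially_def B_path_append)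
    then show "int (A_path A \<nu>) dvd (k - l) div ?a"
      using a A_path_pos[OF \<mu>] by (simp add: A_path_append dvd_div_iff_mult mult.commute)
  qed
  ultimately show ?thesis by simp
qed (simp add: path_res_not_B_path[OF \<mu>])

lemma gcls_mem_iff: "(l, y) \<in> gcls N A B (k, i) \<longleftrightarrow> y = i \<and> acts_trivially i (k - l)"
proof -
  have "(\<forall>\<mu>. valid_path N A i \<mu> \<longrightarrow> path_act A B (k, i) \<mu> = path_act A B (l, y) \<mu>)
        \<longleftrightarrow> acts_trivially i (k - l)"
  proof
    assume eq: "\<forall>\<mu>. valid_path N A i \<mu> \<longrightarrow> path_act A B (k, i) \<mu> = path_act A B (l, y) \<mu>"
    show "acts_trivially i (k - l)"
      unfolding acts_trivially_def
    proof (intro allI impI)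
      fix \<nu> assume \<nu>: "B_path i \<nu>"
      then have "valid_path N A i \<nu>" by (simp add: B_path_def)
      then show "int (A_path A \<nu>) dvd k - l"
        using eq path_act_eq_iff B_prefix_B_path[OF \<nu>] by metis
    qed
  next
    assume "acts_trivially i (k - l)"
    then show "\<forall>\<mu>. valid_path N A i \<mu> \<longrightarrow> path_act A B (k, i) \<mu> = path_act A B (l, y) \<mu>"
      using path_act_eq_iff B_path_B_prefix by (simp add: acts_trivially_def)
  qed
  then show ?thesis by (auto simp: gcls_def)
qed

lemma gcls_eq_iff: "gcls N A B (k, i) = gcls N A B (l, i) \<longleftrightarrow> acts_trivially i (k - l)"
proof
  assume "gcls N A B (k, i) = gcls N A B (l, i)"
  then have "(l, i) \<in> gcls N A B (k, i)" by (simp add: gcls_mem_iff)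
  then show "acts_trivially i (k - l)" by (simp add: gcls_mem_iff)
next
  assume kl: "acts_trivially i (k - l)"
  have "acts_trivially i (k - m) \<longleftrightarrow> acts_trivially i (l - m)" for m
    using acts_trivially_add_iff[OF kl, of "l - m"] by simp
  then show "gcls N A B (k, i) = gcls N A B (l, i)" by (auto simp: gcls_mem_iff)
qed

lemma gcls_in_G_B: "i \<in> {1..N} \<Longrightarrow> gcls N A B (k, i) \<in> G_B N A B"
  by (auto simp: G_B_def)

lemma G_B_cases:
  assumes "g \<in> G_B N A B"
  obtains k i where "i \<in> {1..N}" "g = gcls N A B (k, i)"
  using assms unfolding G_B_def by (metis (mono_tags, lifting) imageE mem_Collect_eq prod.collapse)

lemma grep_gcls:
  obtains l where "grep (gcls N A B (k, i)) = (l, i)" "acts_trivially i (k - l)"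
proof -
  have "(k, i) \<in> gcls N A B (k, i)" by (simp add: gcls_mem_iff)
  then have "grep (gcls N A B (k, i)) \<in> gcls N A B (k, i)" unfolding grep_def by (rule someI)
  moreover obtain l y where "grep (gcls N A B (k, i)) = (l, y)" by fastforce
  ultimately show thesis using that by (simp add: gcls_mem_iff)
qed

lemma gdom_gcls [simp]: "gdom (gcls N A B (k, i)) = i"
  by (rule grep_gcls[of k i]) (simp add: gdom_def)

lemma gact_gcls: "gact A B (gcls N A B (k, i)) \<mu> = path_act A B (k, i) \<mu>" if "valid_path N A i \<mu>"
proof (rule grep_gcls[of k i])
  fix l assume "grep (gcls N A B (k, i)) = (l, i)" "acts_trivially i (k - l)"
  then show ?thesis
    using that path_act_eq_iff B_path_B_prefix by (simp add: gact_def acts_trivially_def dvd_diff_commute)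
qed

lemma gres_gcls:
  assumes "valid_path N A i \<mu>"
  shows "gres N A B (gcls N A B (k, i)) \<mu> = gcls N A B (fst (path_res A B (k, i) \<mu>), path_src i \<mu>)"
proof -
  obtain l where l: "grep (gcls N A B (k, i)) = (l, i)" "acts_trivially i (l - k)"
    by (rule grep_gcls[of k i]) (metis acts_trivially_minus_iff minus_diff_eq)
  have "gres N A B (gcls N A B (k, i)) \<mu> = gcls N A B (path_res A B (l, i) \<mu>)"
    by (simp add: gres_def l(1))
  also have "path_res A B (l, i) \<mu> = (fst (path_res A B (l, i) \<mu>), path_src i \<mu>)"
    using path_res_snd[of A B "(l, i)" \<mu>] by (metis prod.collapse snd_conv)
  also have "gcls N A B \<dots> = gcls N A B (fst (path_res A B (k, i) \<mu>), path_src i \<mu>)"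
    using acts_trivially_path_res[OF assms l(2)] gcls_eq_iff by blast
  finally show ?thesis .
qed

lemma finite_isotropy_iff: "finite (isotropy N A B i) \<longleftrightarrow> (\<exists>d. d \<noteq> 0 \<and> acts_trivially i d)"
proof
  assume fin: "finite (isotropy N A B i)"
  have "isotropy N A B i = range (\<lambda>k. gcls N A B (k, i))" by (auto simp: isotropy_def)
  then have "\<not> inj (\<lambda>k. gcls N A B (k, i))"
    using fin finite_imageD[of "\<lambda>k. gcls N A B (k, i)" UNIV] by auto
  then obtain k l where "k \<noteq> l" "gcls N A B (k, i) = gcls N A B (l, i)" by (auto simp: inj_def)
  then show "\<exists>d. d \<noteq> 0 \<and> acts_trivially i d" by (auto simp: gcls_eq_iff intro!: exI[of _ "k - l"])
next
  assume "\<exists>d. d \<noteq> 0 \<and> acts_trivially i d"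
  then obtain d0 where "d0 \<noteq> 0" "acts_trivially i d0" by blast
  define d where "d = \<bar>d0\<bar>"
  have d: "d > 0" "acts_trivially i d"
    unfolding d_def using \<open>d0 \<noteq> 0\<close> \<open>acts_trivially i d0\<close> by (simp_all add: abs_if)
  have "isotropy N A B i \<subseteq> (\<lambda>k. gcls N A B (k, i)) ` {0..<d}"
  proof
    fix g assume "g \<in> isotropy N A B i"
    then obtain k where g: "g = gcls N A B (k, i)" by (auto simp: isotropy_def)
    have "acts_trivially i (k - k mod d)"
      using acts_trivially_mult[OF d(2), of "k div d"] by (simp add: minus_mod_eq_div_mult)
    then have "g = gcls N A B (k mod d, i)" using g gcls_eq_iff by blast
    then show "g \<in> (\<lambda>k. gcls N A B (k, i)) ` {0..<d}" using d(1) by simp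
  qed
  then show "finite (isotropy N A B i)" using finite_subset by blast
qed

lemma V_fin_iff: "i \<in> V_fin N A B \<longleftrightarrow> i \<in> {1..N} \<and> (\<exists>d. d \<noteq> 0 \<and> acts_trivially i d)"
  by (auto simp: V_fin_def V_inf_def finite_isotropy_iff)

lemma not_V_inf_if_trivial: "acts_trivially i 1 \<Longrightarrow> i \<notin> V_inf N A B"
  by (auto simp: V_inf_def finite_isotropy_iff intro!: exI[of _ 1])

section \<open>The subgraphs E_{A,infinity} and E_{A,<infinity}\<close>

abbreviation inf_path :: "nat \<Rightarrow> edge list \<Rightarrow> bool" where
  "inf_path \<equiv> subgraph_path N A (V_inf N A B) (edges_inf N A B)"

abbreviation fin_path :: "nat \<Rightarrow> edge list \<Rightarrow> bool" where
  "fin_path \<equiv> subgraph_path N A (V_fin N A B) (edges_fin N A B)"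

lemma inf_path_B_path: "inf_path i \<mu> \<Longrightarrow> B_path i \<mu>"
  by (auto simp: subgraph_path_def B_path_def edges_inf_def)

lemma fin_path_B_path: "fin_path i \<mu> \<Longrightarrow> B_path i \<mu>"
  by (auto simp: subgraph_path_def B_path_def edges_fin_def)

lemma V_fin_Cons: "i \<in> V_fin N A B \<Longrightarrow> B_path i (e # \<mu>) \<Longrightarrow> edge_s e \<in> V_fin N A B"
  unfolding V_fin_iff using acts_trivially_Cons is_edge_vertices by (meson B_path_Cons)

lemma B_path_fin_path:
  "B_path i \<mu> \<Longrightarrow> i \<in> V_fin N A B \<Longrightarrow> fin_path i \<mu> \<and> path_src i \<mu> \<in> V_fin N A B"
proof (induction \<mu> arbitrary: i)
  case (Cons e \<mu>)
  then have "edge_s e \<in> V_fin N A B" using V_fin_Cons by blast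
  moreover have "e \<in> edges_fin N A B" using Cons.prems by (auto simp: B_path_Cons edges_fin_def)
  ultimately show ?case
    using Cons.IH Cons.prems by (auto simp: B_path_Cons subgraph_path_def path_src_Cons)
qed (auto simp: subgraph_path_def path_src_def B_path_def)

lemma B_path_inf_path: "B_path i \<mu> \<Longrightarrow> path_src i \<mu> \<in> V_inf N A B \<Longrightarrow> inf_path i \<mu>"
proof (induction \<mu> arbitrary: i)
  case (Cons e \<mu>)
  then have edge: "is_edge N A e" "edge_r e = i" "B (edge_r e) (edge_s e) \<noteq> 0"
    and tail: "inf_path (edge_s e) \<mu>"
    by (auto simp: B_path_Cons path_src_Cons)
  then have s: "edge_s e \<in> V_inf N A B" by (simp add: subgraph_path_def)
  have "i \<in> V_inf N A B"
  proof (rule ccontr)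
    assume "i \<notin> V_inf N A B"
    then have "i \<in> V_fin N A B" using edge is_edge_vertices[OF edge(1)] by (simp add: V_fin_def)
    then show False using V_fin_Cons Cons.prems(1) s by (auto simp: V_fin_def)
  qed
  then show ?case using edge tail s by (auto simp: subgraph_path_def edges_inf_def)
qed (simp add: path_src_def subgraph_path_def B_path_def)

lemma inf_path_src: "inf_path i \<mu> \<Longrightarrow> path_src i \<mu> \<in> V_inf N A B"
  by (cases \<mu> rule: rev_cases) (auto simp: subgraph_path_def path_src_def edges_inf_def)

lemma inf_path_append: "inf_path i (\<mu> @ \<nu>) \<Longrightarrow> inf_path i \<mu> \<and> inf_path (path_src i \<mu>) \<nu>"
  using inf_path_src[of i \<mu>] by (auto simp: subgraph_path_def valid_path_append)

definition bounded_unit_paths :: "nat \<Rightarrow> bool" where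
  "bounded_unit_paths K \<longleftrightarrow> (\<forall>i \<mu>. inf_path i \<mu> \<and> A_path A \<mu> = 1 \<longrightarrow> length \<mu> \<le> K)"

definition eventually_unit_paths :: "nat \<Rightarrow> bool" where
  "eventually_unit_paths K \<longleftrightarrow>
     (\<forall>i \<mu>. fin_path i \<mu> \<and> length \<mu> \<ge> K \<longrightarrow> A_path A (path_seg \<mu> K (length \<mu>)) = 1)"

lemma inf_path_A_path_gt:
  assumes K: "bounded_unit_paths K"
  shows "inf_path i \<pi> \<Longrightarrow> (K + 1) * t \<le> length \<pi> \<Longrightarrow> t < A_path A \<pi>"
proof (induction t arbitrary: i \<pi>)
  case 0
  then show ?case using A_path_pos by (auto simp: subgraph_path_def)
next
  case (Suc t)
  let ?\<pi>\<^sub>1 = "take (K + 1) \<pi>" and ?\<pi>\<^sub>2 = "drop (K + 1) \<pi>"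
  have \<pi>\<^sub>1: "inf_path i ?\<pi>\<^sub>1" and \<pi>\<^sub>2: "inf_path (path_src i ?\<pi>\<^sub>1) ?\<pi>\<^sub>2"
    using inf_path_append[of i ?\<pi>\<^sub>1 ?\<pi>\<^sub>2] Suc.prems(1) by simp_all
  have "length ?\<pi>\<^sub>1 = K + 1" using Suc.prems(2) by simp
  then have "A_path A ?\<pi>\<^sub>1 \<noteq> 1" using K \<pi>\<^sub>1 unfolding bounded_unit_paths_def by force
  moreover have "A_path A ?\<pi>\<^sub>1 > 0" using \<pi>\<^sub>1 A_path_pos by (auto simp: subgraph_path_def)
  moreover have "t < A_path A ?\<pi>\<^sub>2" using Suc.IH[OF \<pi>\<^sub>2] Suc.prems(2) by simp
  ultimately have "2 * Suc t \<le> A_path A ?\<pi>\<^sub>1 * A_path A ?\<pi>\<^sub>2"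
    by (intro mult_le_mono) simp_all
  then show ?case using A_path_append[of A ?\<pi>\<^sub>1 ?\<pi>\<^sub>2] by simp
qed

lemma eventually_unit_paths_end_trivial:
  assumes K: "eventually_unit_paths K" and j: "j \<in> V_fin N A B"
    and \<alpha>: "B_path j \<alpha>" and len: "K \<le> length \<alpha>"
  shows "acts_trivially (path_src j \<alpha>) 1"
  unfolding acts_trivially_def
proof (intro allI impI)
  fix \<nu> assume "B_path (path_src j \<alpha>) \<nu>"
  then have "fin_path j (\<alpha> @ \<nu>)" using \<alpha> j B_path_fin_path B_path_append by blast
  then have "A_path A (drop (K - 1) (\<alpha> @ \<nu>)) = 1"
    using K len unfolding eventually_unit_paths_def path_seg_to_end by force
  then show "int (A_path A \<nu>) dvd 1" using len by (simp add: A_path_append)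
qed

lemma eventually_unit_paths_if_trivial:
  assumes "\<forall>j \<alpha>. j \<in> V_fin N A B \<and> B_path j \<alpha> \<and> K \<le> length \<alpha> \<longrightarrow> acts_trivially (path_src j \<alpha>) 1"
  shows "eventually_unit_paths (Suc K)"
  unfolding eventually_unit_paths_def
proof (intro allI impI)
  fix i \<mu> assume \<mu>: "fin_path i \<mu> \<and> Suc K \<le> length \<mu>"
  then have "B_path i (take K \<mu> @ drop K \<mu>)" "i \<in> V_fin N A B"
    by (simp_all add: fin_path_B_path subgraph_path_def)
  then have "acts_trivially (path_src i (take K \<mu>)) 1" "B_path (path_src i (take K \<mu>)) (drop K \<mu>)"
    using assms \<mu> unfolding B_path_append by auto
  then show "A_path A (path_seg \<mu> (Suc K) (length \<mu>)) = 1"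
    by (simp add: acts_trivially_def path_seg_to_end)
qed

section \<open>Regularity and contraction\<close>

definition regular_power :: "nat \<Rightarrow> int \<Rightarrow> nat \<Rightarrow> bool" where
  "regular_power v c K \<longleftrightarrow> (\<forall>\<mu>. B_path v \<mu> \<and> int (A_path A \<mu>) dvd c \<and> K \<le> length \<mu>
     \<longrightarrow> acts_trivially (path_src v \<mu>) (c div int (A_path A \<mu>)))"

lemma regular_beyond_gcls_iff:
  assumes v: "v \<in> {1..N}"
  shows "regular_beyond N A B (gcls N A B (c, v)) K \<longleftrightarrow> regular_power v c K"
proof -
  let ?g = "gcls N A B (c, v)"
  have step: "(gact A B ?g \<mu> = \<mu> \<longrightarrow> gres N A B ?g \<mu> = gunit N A B (path_src v \<mu>)) \<longleftrightarrow>
      (B_path v \<mu> \<and> int (A_path A \<mu>) dvd c \<longrightarrow> acts_trivially (path_src v \<mu>) (c div int (A_path A \<mu>)))"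
    if \<mu>: "valid_path N A v \<mu>" for \<mu>
  proof -
    have fixed: "gact A B ?g \<mu> = \<mu> \<longleftrightarrow> int (A_path A (B_prefix \<mu>)) dvd c"
      using gact_gcls[OF \<mu>] path_act_eq_iff[OF \<mu>, of c v 0 v] path_act_res_zero[OF \<mu>] by simp
    have unit: "gres N A B ?g \<mu> = gunit N A B (path_src v \<mu>) \<longleftrightarrow>
        acts_trivially (path_src v \<mu>) (fst (path_res A B (c, v) \<mu>))"
      using gres_gcls[OF \<mu>] gcls_eq_iff by (simp add: gunit_def)
    show ?thesis
    proof (cases "B_path v \<mu>")
      case True
      then show ?thesis using fixed unit path_res_B_path_dvd B_prefix_B_path by auto
    next
      case False
      then show ?thesis using unit path_res_not_B_path[OF \<mu> False] by simp
    qed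
  qed
  show ?thesis
    unfolding regular_beyond_def regular_power_def gdom_gcls
  proof (intro iffI allI impI)
    fix \<mu> assume "\<forall>\<mu>. valid_path N A v \<mu> \<and> gact A B ?g \<mu> = \<mu> \<and> K \<le> length \<mu>
        \<longrightarrow> gres N A B ?g \<mu> = gunit N A B (path_src v \<mu>)"
      and "B_path v \<mu> \<and> int (A_path A \<mu>) dvd c \<and> K \<le> length \<mu>"
    then show "acts_trivially (path_src v \<mu>) (c div int (A_path A \<mu>))"
      using step[of \<mu>] by (simp add: B_path_def)
  next
    fix \<mu> assume "\<forall>\<mu>. B_path v \<mu> \<and> int (A_path A \<mu>) dvd c \<and> K \<le> length \<mu>
        \<longrightarrow> acts_trivially (path_src v \<mu>) (c div int (A_path A \<mu>))"
      and "valid_path N A v \<mu> \<and> gact A B ?g \<mu> = \<mu> \<and> K \<le> length \<mu>"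
    then show "gres N A B ?g \<mu> = gunit N A B (path_src v \<mu>)"
      using step[of \<mu>] by simp
  qed
qed

lemma regular_if_regular_power:
  assumes "\<forall>v\<in>{1..N}. \<forall>c. \<exists>K. regular_power v c K"
  shows "regular N A B"
  unfolding regular_iff_regular_beyond
proof
  fix g assume "g \<in> G_B N A B"
  then obtain c v where "v \<in> {1..N}" "g = gcls N A B (c, v)" by (rule G_B_cases)
  then show "\<exists>K. regular_beyond N A B g K" using assms regular_beyond_gcls_iff by simp
qed

lemma regular_uniform_regular_power:
  assumes "regular N A B"
  obtains K where "\<forall>v\<in>V_inf N A B. regular_power v 1 K" "\<forall>j\<in>V_fin N A B. \<forall>c. regular_power j c K"
proof -
  let ?X = "(\<lambda>v. gcls N A B (1, v)) ` V_inf N A B \<union> \<Union> (isotropy N A B ` V_fin N A B)"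
  have V: "V_inf N A B \<subseteq> {1..N}" "V_fin N A B \<subseteq> {1..N}" by (auto simp: V_inf_def V_fin_def)
  have "finite (isotropy N A B j)" if "j \<in> V_fin N A B" for j
    using that by (simp add: V_fin_def V_inf_def)
  then have "finite ?X" using V finite_subset by blast
  moreover have "isotropy N A B j \<subseteq> G_B N A B" if "j \<in> {1..N}" for j
    using that gcls_in_G_B by (auto simp: isotropy_def)
  then have "?X \<subseteq> G_B N A B" using V gcls_in_G_B by blast
  ultimately have "\<exists>K. \<forall>g\<in>?X. regular_beyond N A B g K" by (rule regular_uniform_bound[OF assms])
  then obtain K where K: "\<forall>g\<in>?X. regular_beyond N A B g K" ..
  have "regular_power v 1 K" if "v \<in> V_inf N A B" for v
    using K that V regular_beyond_gcls_iff by blast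
  moreover have "regular_power j c K" if "j \<in> V_fin N A B" for j c
  proof -
    have "gcls N A B (c, j) \<in> ?X" using that by (auto simp: isotropy_def)
    then show ?thesis using K that V regular_beyond_gcls_iff by blast
  qed
  ultimately show thesis using that by blast
qed

lemma bounded_unit_paths_if_regular_power:
  assumes "\<forall>v\<in>V_inf N A B. regular_power v 1 K"
  shows "bounded_unit_paths K"
  unfolding bounded_unit_paths_def
proof (intro allI impI)
  fix i \<mu> assume \<mu>: "inf_path i \<mu> \<and> A_path A \<mu> = 1"
  show "length \<mu> \<le> K"
  proof (rule ccontr)
    assume "\<not> length \<mu> \<le> K"
    then have "acts_trivially (path_src i \<mu>) 1"
      using assms \<mu> inf_path_B_path by (auto simp: regular_power_def subgraph_path_def)
    moreover have "path_src i \<mu> \<in> V_inf N A B" using \<mu> inf_path_src by blast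
    ultimately show False using not_V_inf_if_trivial by blast
  qed
qed

lemma eventually_unit_paths_if_regular_power:
  assumes "\<forall>j\<in>V_fin N A B. \<forall>c. regular_power j c K"
  shows "eventually_unit_paths (Suc K)"
proof (rule eventually_unit_paths_if_trivial, intro allI impI)
  fix j \<alpha> assume \<alpha>: "j \<in> V_fin N A B \<and> B_path j \<alpha> \<and> K \<le> length \<alpha>"
  then have "regular_power j (int (A_path A \<alpha>)) K" using assms by blast
  then have "B_path j \<alpha> \<and> int (A_path A \<alpha>) dvd int (A_path A \<alpha>) \<and> K \<le> length \<alpha> \<longrightarrow>
      acts_trivially (path_src j \<alpha>) (int (A_path A \<alpha>) div int (A_path A \<alpha>))"
    unfolding regular_power_def by (rule spec)
  moreover have "0 < A_path A \<alpha>" using \<alpha> A_path_pos by (auto simp: B_path_def)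
  ultimately show "acts_trivially (path_src j \<alpha>) 1" using \<alpha> by simp
qed

lemma regular_imp_conditions:
  assumes "regular N A B"
  shows "\<exists>K. bounded_unit_paths K \<and> eventually_unit_paths K"
proof -
  obtain K where "\<forall>v\<in>V_inf N A B. regular_power v 1 K" "\<forall>j\<in>V_fin N A B. \<forall>c. regular_power j c K"
    using regular_uniform_regular_power[OF assms] .
  then have "bounded_unit_paths K" "eventually_unit_paths (Suc K)"
    using bounded_unit_paths_if_regular_power eventually_unit_paths_if_regular_power by blast+
  then have "bounded_unit_paths (Suc K)" "eventually_unit_paths (Suc K)"
    unfolding bounded_unit_paths_def by (auto intro: le_SucI)
  then show ?thesis by blast
qed

lemma long_B_path_end_trivial:
  assumes K_inf: "bounded_unit_paths K" and K_fin: "eventually_unit_paths K"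
    and \<mu>: "B_path v \<mu>" and c: "int (A_path A \<mu>) dvd c" "c \<noteq> 0"
    and len: "(K + 1) * nat \<bar>c\<bar> + K \<le> length \<mu>"
  shows "acts_trivially (path_src v \<mu>) 1"
proof -
  let ?n = "(K + 1) * nat \<bar>c\<bar>"
  let ?\<mu>\<^sub>1 = "take ?n \<mu>" and ?\<mu>\<^sub>2 = "drop ?n \<mu>"
  have \<mu>\<^sub>1: "B_path v ?\<mu>\<^sub>1" and \<mu>\<^sub>2: "B_path (path_src v ?\<mu>\<^sub>1) ?\<mu>\<^sub>2"
    using \<mu> B_path_append[of v ?\<mu>\<^sub>1 ?\<mu>\<^sub>2] by simp_all
  have "path_src v ?\<mu>\<^sub>1 \<notin> V_inf N A B"
  proof
    assume "path_src v ?\<mu>\<^sub>1 \<in> V_inf N A B"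
    then have "nat \<bar>c\<bar> < A_path A ?\<mu>\<^sub>1"
      using inf_path_A_path_gt[OF K_inf B_path_inf_path[OF \<mu>\<^sub>1]] len by simp
    moreover have dvd: "int (A_path A ?\<mu>\<^sub>1) dvd c"
      using c(1) A_path_append[of A ?\<mu>\<^sub>1 ?\<mu>\<^sub>2] by (simp add: dvd_mult_left)
    moreover have "int (A_path A ?\<mu>\<^sub>1) \<le> \<bar>c\<bar>" using dvd_imp_le_int[OF c(2) dvd] by simp
    ultimately show False by linarith
  qed
  then have "path_src v ?\<mu>\<^sub>1 \<in> V_fin N A B"
    using \<mu>\<^sub>1 valid_path_src by (auto simp: V_fin_def B_path_def)
  moreover have "K \<le> length ?\<mu>\<^sub>2" using len by simp
  ultimately have "acts_trivially (path_src (path_src v ?\<mu>\<^sub>1) ?\<mu>\<^sub>2) 1"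
    using eventually_unit_paths_end_trivial[OF K_fin _ \<mu>\<^sub>2] by blast
  then show ?thesis using path_src_append[of v ?\<mu>\<^sub>1 ?\<mu>\<^sub>2] by simp
qed

lemma regular_power_if_conditions:
  assumes "bounded_unit_paths K" "eventually_unit_paths K"
  shows "regular_power v c ((K + 1) * nat \<bar>c\<bar> + K)"
  unfolding regular_power_def
proof (intro allI impI)
  fix \<mu> assume \<mu>: "B_path v \<mu> \<and> int (A_path A \<mu>) dvd c \<and> (K + 1) * nat \<bar>c\<bar> + K \<le> length \<mu>"
  show "acts_trivially (path_src v \<mu>) (c div int (A_path A \<mu>))"
  proof (cases "c = 0")
    case False
    then have "acts_trivially (path_src v \<mu>) 1" using long_B_path_end_trivial assms \<mu> by blast
    then show ?thesis using acts_trivially_mult by fastforce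
  qed simp
qed

lemma regular_if_conditions: "bounded_unit_paths K \<Longrightarrow> eventually_unit_paths K \<Longrightarrow> regular N A B"
  using regular_if_regular_power regular_power_if_conditions by blast

lemma path_res_abs_le_1:
  assumes K: "bounded_unit_paths K" and \<mu>: "valid_path N A i \<mu>"
    and src: "path_src i \<mu> \<in> V_inf N A B" and len: "(K + 1) * nat \<bar>k\<bar> \<le> length \<mu>"
  shows "\<bar>fst (path_res A B (k, x) \<mu>)\<bar> \<le> 1"
proof (cases "B_path i \<mu>")
  case True
  have "nat \<bar>k\<bar> < A_path A \<mu>"
    using inf_path_A_path_gt[OF K B_path_inf_path[OF True src] len] .
  then have "\<bar>k\<bar> < int (A_path A \<mu>)" by linarith
  moreover have "path_digits A \<mu> < A_path A \<mu>" using path_digits_less[OF \<mu>] .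
  ultimately show ?thesis
    unfolding path_res_B_path[OF True] by (intro abs_add_div_le_1) simp_all
qed (simp add: path_res_not_B_path[OF \<mu>])

lemma contracting_if_bounded_unit_paths:
  assumes K: "bounded_unit_paths K"
  shows "contracting N A B"
  unfolding contracting_def
proof (rule exI[of _ "gcls N A B ` ({-1, 0, 1} \<times> {1..N}) \<union> \<Union> (isotropy N A B ` V_fin N A B)"],
    intro conjI ballI)
  let ?F = "gcls N A B ` ({-1, 0, 1} \<times> {1..N}) \<union> \<Union> (isotropy N A B ` V_fin N A B)"
  have V: "V_fin N A B \<subseteq> {1..N}" by (auto simp: V_fin_def)
  have "finite (isotropy N A B j)" if "j \<in> V_fin N A B" for j
    using that by (simp add: V_fin_def V_inf_def)
  then show "finite ?F" using V finite_subset by blast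
  have "isotropy N A B j \<subseteq> G_B N A B" if "j \<in> {1..N}" for j
    using that gcls_in_G_B by (auto simp: isotropy_def)
  then show "?F \<subseteq> G_B N A B" using V gcls_in_G_B by blast
  fix g assume "g \<in> G_B N A B"
  then obtain k i where i: "i \<in> {1..N}" and g: "g = gcls N A B (k, i)" by (rule G_B_cases)
  show "\<exists>n. \<forall>m\<ge>n. \<forall>\<mu>. valid_path N A (gdom g) \<mu> \<and> length \<mu> = m \<longrightarrow> gres N A B g \<mu> \<in> ?F"
  proof (rule exI[of _ "(K + 1) * nat \<bar>k\<bar>"], intro allI impI)
    fix m \<mu> assume "(K + 1) * nat \<bar>k\<bar> \<le> m" and "valid_path N A (gdom g) \<mu> \<and> length \<mu> = m"
    then have \<mu>: "valid_path N A i \<mu>" and len: "(K + 1) * nat \<bar>k\<bar> \<le> length \<mu>" using g by simp_all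
    let ?r = "fst (path_res A B (k, i) \<mu>)" and ?s = "path_src i \<mu>"
    have res: "gres N A B g \<mu> = gcls N A B (?r, ?s)" using gres_gcls[OF \<mu>] g by simp
    show "gres N A B g \<mu> \<in> ?F"
    proof (cases "?s \<in> V_fin N A B")
      case True
      then show ?thesis unfolding res isotropy_def by blast
    next
      case False
      then have "?s \<in> V_inf N A B" using valid_path_src[OF \<mu>] by (simp add: V_fin_def)
      then have "\<bar>?r\<bar> \<le> 1" using path_res_abs_le_1[OF K \<mu> _ len] by blast
      then have "(?r, ?s) \<in> {-1, 0, 1} \<times> {1..N}" using valid_path_src[OF \<mu>] by auto
      then show ?thesis unfolding res by blast
    qed
  qed
qed

end

theorem corollary3p4:
  fixes N :: nat and A :: "nat \<Rightarrow> nat \<Rightarrow> nat" and B :: "nat \<Rightarrow> nat \<Rightarrow> int"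
  assumes "katsura_pair N A B"
    and "\<forall>i\<in>{1..N}. \<forall>j\<in>{1..N}. B i j \<in> {0, 1}"
  shows "(regular N A B \<longrightarrow> contracting N A B)
    \<and> (regular N A B \<longleftrightarrow> (\<exists>K::nat.
          (\<forall>i \<mu>. subgraph_path N A (V_inf N A B) (edges_inf N A B) i \<mu> \<and> A_path A \<mu> = 1
              \<longrightarrow> length \<mu> \<le> K)
        \<and> (\<forall>i \<mu>. subgraph_path N A (V_fin N A B) (edges_fin N A B) i \<mu> \<and> length \<mu> \<ge> K
              \<longrightarrow> A_path A (path_seg \<mu> K (length \<mu>)) = 1)))"
proof -
  interpret binary_katsura N A B using assms(2) by unfold_locales
  have "regular N A B \<longleftrightarrow> (\<exists>K. bounded_unit_paths K \<and> eventually_unit_paths K)"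
    using regular_imp_conditions regular_if_conditions by blast
  then show ?thesis
    using contracting_if_bounded_unit_paths
    unfolding bounded_unit_paths_def eventually_unit_paths_def by blast
qed

end
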